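(* In the Part I procedure, consider a growth step in phase $\Delta$ out of an even vertex $x$ to an unlabelled vertex $y$, which adds $y$ (odd) and $\mathit{mate}(y)$ (even) to $S$. Let $z$ be any even vertex in $S$ adjacent to $\mathit{mate}(y)$. Then $\mathrm{lcp}(z)\ge\mathrm{lcp}(x)$; in particular $\mathrm{lcp}(z)+\mathrm{lcp}(\mathit{mate}(y))\ge 2\Delta-2$.
   Context: Let $G=(V,E)$ be a finite undirected graph and $M$ a matching in $G$; free vertices and $\mathit{mate}(v)$ are as usual. The Part I procedure maintains a search structure $S$: a forest whose nodes are either single (odd) vertices or blossoms (disjoint vertex sets with a distinguished base vertex), each tree rooted at a blossom containing a free vertex. Vertices in $S$ are labelled even (those in blossoms) or odd; vertices not in $S$ are unlabelled. A vertex is born even/odd according to the label it receives when inserted. The procedure maintains $\mathrm{lcp}(v)$ for even vertices and $\mathrm{lcp}_{\mathrm{odd}}(v)$ for vertices born odd. The blossom nodes currently in $S$ are the maximal blossoms. Phase $0$: every free vertex $v$ becomes the root of its own tree as a trivial blossom $\{v\}$ with base $v$, even, $\mathrm{lcp}(v)=0$. For $\Delta=1,2,\dots$, phase $\Delta$ does: (i) if $\Delta$ is even, growth steps: while some even vertex $v$ with $\mathrm{lcp}(v)=\Delta-2$ has a neighbour $x$ not in $S$, add $x$ as an odd child of the blossom containing $v$ with $\mathrm{lcp}_{\mathrm{odd}}(x)=\Delta-1$, and $\mathit{mate}(x)$ as a child of $x$, as a trivial even blossom with $\mathrm{lcp}(\mathit{mate}(x))=\Delta$; (ii) bridge steps: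 while there is a non-matching edge $xy$ with $x,y$ even, in different maximal blossoms $B_x,B_y$, and $\mathrm{lcp}(x)+\mathrm{lcp}(y)=2\Delta-2$: if $B_x,B_y$ lie in different trees the procedure stops; otherwise let $B$ be the lowest common ancestor of $B_x,B_y$; every odd vertex $z$ on the tree paths from $B_x$ and $B_y$ to $B$ becomes even with $\mathrm{lcp}(z)=\mathrm{lcp}(x)+1+\mathrm{lcp}(y)-\mathrm{lcp}_{\mathrm{odd}}(z)$, and $B$ together with all blossoms and odd vertices on both paths is merged into one new blossom with base equal to the base of $B$, replacing $B$ in the tree. *)

theory Defs
  imports Main
begin

definition graph :: "'a set \<Rightarrow> 'a set set \<Rightarrow> bool" where
  "graph V E \<longleftrightarrow> finite V \<and>
     (\<forall>e\<in>E. \<exists>u v. e = {u, v} \<and> u \<noteq> v \<and> u \<in> V \<and> v \<in> V)"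

definition matching :: "'a set set \<Rightarrow> 'a set set \<Rightarrow> bool" where
  "matching E M \<longleftrightarrow> M \<subseteq> E \<and> (\<forall>e1\<in>M. \<forall>e2\<in>M. e1 \<noteq> e2 \<longrightarrow> e1 \<inter> e2 = {})"

definition free :: "'a set \<Rightarrow> 'a set set \<Rightarrow> 'a \<Rightarrow> bool" where
  "free V M v \<longleftrightarrow> v \<in> V \<and> v \<notin> \<Union>M"

definition mate :: "'a set set \<Rightarrow> 'a \<Rightarrow> 'a" where
  "mate M v = (THE u. {u, v} \<in> M)"

datatype stage = Grow | Bridge | Stopped

text \<open>Nodes of the search forest are disjoint vertex sets: an odd vertex v is the node {v};
  a blossom is the set of its vertices. par gives the parent node (None for roots).
  evens/odds are the labelled vertices; lcp is meaningful for even vertices,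
  lcpo for vertices born odd. delta is the current phase, stg the part of the phase.\<close>

record 'a sstate =
  delta :: nat
  stg :: stage
  nodes :: "'a set set"
  par :: "'a set \<Rightarrow> 'a set option"
  base :: "'a set \<Rightarrow> 'a"
  evens :: "'a set"
  odds :: "'a set"
  lcp :: "'a \<Rightarrow> nat"
  lcpo :: "'a \<Rightarrow> nat"

definition inS :: "'a sstate \<Rightarrow> 'a \<Rightarrow> bool" where
  "inS s v \<longleftrightarrow> v \<in> \<Union>(nodes s)"

definition node_of :: "'a sstate \<Rightarrow> 'a \<Rightarrow> 'a set" where
  "node_of s v = (THE N. N \<in> nodes s \<and> v \<in> N)"

definition parent_rel :: "'a sstate \<Rightarrow> 'a set \<Rightarrow> 'a set \<Rightarrow> bool" where
  "parent_rel s N P \<longleftrightarrow> N \<in> nodes s \<and> par s N = Some P"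

definition anc :: "'a sstate \<Rightarrow> 'a set \<Rightarrow> 'a set \<Rightarrow> bool" where
  "anc s A N \<longleftrightarrow> (parent_rel s)\<^sup>*\<^sup>* N A"

definition is_lca :: "'a sstate \<Rightarrow> 'a set \<Rightarrow> 'a set \<Rightarrow> 'a set \<Rightarrow> bool" where
  "is_lca s B N1 N2 \<longleftrightarrow> B \<in> nodes s \<and> anc s B N1 \<and> anc s B N2 \<and>
     (\<forall>C. anc s C N1 \<and> anc s C N2 \<longrightarrow> anc s C B)"

definition same_tree :: "'a sstate \<Rightarrow> 'a set \<Rightarrow> 'a set \<Rightarrow> bool" where
  "same_tree s N1 N2 \<longleftrightarrow> (\<exists>C. anc s C N1 \<and> anc s C N2)"

definition init :: "'a set \<Rightarrow> 'a set set \<Rightarrow> 'a sstate" where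
  "init V M = \<lparr> delta = 1, stg = Grow,
     nodes = {{v} | v. free V M v},
     par = (\<lambda>_. None),
     base = (\<lambda>N. SOME v. v \<in> N),
     evens = {v. free V M v}, odds = {},
     lcp = (\<lambda>_. 0), lcpo = (\<lambda>_. 0) \<rparr>"

definition grow_update :: "'a set set \<Rightarrow> 'a sstate \<Rightarrow> 'a \<Rightarrow> 'a \<Rightarrow> 'a sstate" where
  "grow_update M s x y =
     s\<lparr> nodes := nodes s \<union> {{y}, {mate M y}},
        par := (par s)({y} := Some (node_of s x), {mate M y} := Some {y}),
        base := (base s)({mate M y} := mate M y),
        odds := insert y (odds s),
        evens := insert (mate M y) (evens s),
        lcpo := (lcpo s)(y := delta s - 1),
        lcp := (lcp s)(mate M y := delta s) \<rparr>"

definition grow_enabled :: "'a set set \<Rightarrow> 'a sstate \<Rightarrow> 'a \<Rightarrow> 'a \<Rightarrow> bool" where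
  "grow_enabled E s x y \<longleftrightarrow> stg s = Grow \<and> even (delta s) \<and>
     x \<in> evens s \<and> lcp s x + 2 = delta s \<and> {x, y} \<in> E \<and> \<not> inS s y"

definition grow_step :: "'a set set \<Rightarrow> 'a set set \<Rightarrow> 'a sstate \<Rightarrow> 'a \<Rightarrow> 'a \<Rightarrow> 'a sstate \<Rightarrow> bool" where
  "grow_step E M s x y s' \<longleftrightarrow> grow_enabled E s x y \<and> s' = grow_update M s x y"

definition bridge_enabled :: "'a set set \<Rightarrow> 'a set set \<Rightarrow> 'a sstate \<Rightarrow> 'a \<Rightarrow> 'a \<Rightarrow> bool" where
  "bridge_enabled E M s x y \<longleftrightarrow> stg s = Bridge \<and> {x, y} \<in> E \<and> {x, y} \<notin> M \<and>
     x \<in> evens s \<and> y \<in> evens s \<and> node_of s x \<noteq> node_of s y \<and>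
     lcp s x + lcp s y + 2 = 2 * delta s"

definition on_paths :: "'a sstate \<Rightarrow> 'a set \<Rightarrow> 'a set \<Rightarrow> 'a set \<Rightarrow> 'a set set" where
  "on_paths s B N1 N2 = {N \<in> nodes s. (anc s N N1 \<or> anc s N N2) \<and> anc s B N}"

definition merge :: "'a sstate \<Rightarrow> 'a set \<Rightarrow> 'a \<Rightarrow> 'a \<Rightarrow> 'a sstate" where
  "merge s B x y =
     (let P = on_paths s B (node_of s x) (node_of s y);
          Bn = \<Union>P;
          Z = odds s \<inter> Bn
      in s\<lparr> nodes := (nodes s - P) \<union> {Bn},
            par := (\<lambda>N. if N = Bn then par s B
                        else (case par s N of None \<Rightarrow> None
                              | Some Q \<Rightarrow> if Q \<in> P then Some Bn else Some Q)),
            base := (base s)(Bn := base s B),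
            evens := evens s \<union> Z,
            odds := odds s - Z,
            lcp := (\<lambda>v. if v \<in> Z then lcp s x + 1 + lcp s y - lcpo s v else lcp s v) \<rparr>)"

inductive step :: "'a set set \<Rightarrow> 'a set set \<Rightarrow> 'a sstate \<Rightarrow> 'a sstate \<Rightarrow> bool"
  for E M where
  grow: "grow_step E M s x y s' \<Longrightarrow> step E M s s'"
| end_growth: "stg s = Grow \<Longrightarrow> \<not> (\<exists>x y. grow_enabled E s x y) \<Longrightarrow>
     step E M s (s\<lparr>stg := Bridge\<rparr>)"
| bridge: "bridge_enabled E M s x y \<Longrightarrow> same_tree s (node_of s x) (node_of s y) \<Longrightarrow>
     is_lca s B (node_of s x) (node_of s y) \<Longrightarrow> step E M s (merge s B x y)"
| stop: "bridge_enabled E M s x y \<Longrightarrow> \<not> same_tree s (node_of s x) (node_of s y) \<Longrightarrow>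
     step E M s (s\<lparr>stg := Stopped\<rparr>)"
| next_phase: "stg s = Bridge \<Longrightarrow> \<not> (\<exists>x y. bridge_enabled E M s x y) \<Longrightarrow>
     step E M s (s\<lparr>delta := delta s + 1, stg := Grow\<rparr>)"

definition reachable :: "'a set \<Rightarrow> 'a set set \<Rightarrow> 'a set set \<Rightarrow> 'a sstate \<Rightarrow> bool" where
  "reachable V E M s \<longleftrightarrow> (step E M)\<^sup>*\<^sup>* (init V M) s"

end

theory Submission
  imports Defs
begin

text \<open>The procedure keeps every even vertex whose growth is over saturated: if
  lcp v + 2 < \<Delta>, or lcp v + 2 = \<Delta> once the growth steps of the (even) phase \<Delta>
  are done, then all neighbours of v are in S. In the growth step of the theorem,
  mate(y) was not yet in S, so its even neighbour z is not finished:
  lcp z + 2 \<ge> \<Delta> = lcp x + 2. Keeping the invariant needs a few auxiliary facts: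
  S contains the free vertices and is closed under mates, lcp is even and
  lcp_odd is odd and below \<Delta>. The last two ensure that the vertices made even by
  a blossom get lcp \<ge> \<Delta>, and that a vertex with lcp + 2 = \<Delta> at the end of a
  phase has \<Delta> even.\<close>

definition scanned :: "'a sstate \<Rightarrow> 'a \<Rightarrow> bool" where
  "scanned s v \<longleftrightarrow> lcp s v + 2 < delta s \<or>
     (lcp s v + 2 = delta s \<and> stg s \<noteq> Grow \<and> even (delta s))"

definition saturated :: "'a set set \<Rightarrow> 'a sstate \<Rightarrow> 'a \<Rightarrow> bool" where
  "saturated E s v \<longleftrightarrow> (\<forall>w. {v, w} \<in> E \<longrightarrow> inS s w)"

definition search_inv :: "'a set \<Rightarrow> 'a set set \<Rightarrow> 'a set set \<Rightarrow> 'a sstate \<Rightarrow> bool" where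
  "search_inv V E M s \<longleftrightarrow>
     (\<forall>v. free V M v \<longrightarrow> inS s v) \<and>
     (\<forall>e\<in>M. \<forall>v\<in>e. \<forall>w\<in>e. inS s v \<longrightarrow> inS s w) \<and>
     (\<forall>v\<in>evens s. inS s v \<and> even (lcp s v) \<and> (scanned s v \<longrightarrow> saturated E s v)) \<and>
     (\<forall>v\<in>odds s. odd (lcpo s v) \<and> lcpo s v < delta s)"

lemma search_invI:
  assumes "\<And>v. free V M v \<Longrightarrow> inS s v"
    and "\<And>e v w. e \<in> M \<Longrightarrow> v \<in> e \<Longrightarrow> w \<in> e \<Longrightarrow> inS s v \<Longrightarrow> inS s w"
    and "\<And>v. v \<in> evens s \<Longrightarrow> inS s v"
    and "\<And>v. v \<in> evens s \<Longrightarrow> even (lcp s v)"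
    and "\<And>v. v \<in> evens s \<Longrightarrow> scanned s v \<Longrightarrow> saturated E s v"
    and "\<And>v. v \<in> odds s \<Longrightarrow> odd (lcpo s v)"
    and "\<And>v. v \<in> odds s \<Longrightarrow> lcpo s v < delta s"
  shows "search_inv V E M s"
  using assms unfolding search_inv_def by blast

lemma
  assumes "search_inv V E M s"
  shows search_inv_free: "free V M v \<Longrightarrow> inS s v"
    and search_inv_mate_closed: "e \<in> M \<Longrightarrow> v \<in> e \<Longrightarrow> w \<in> e \<Longrightarrow> inS s v \<Longrightarrow> inS s w"
    and search_inv_even_inS: "v \<in> evens s \<Longrightarrow> inS s v"
    and search_inv_even_lcp: "v \<in> evens s \<Longrightarrow> even (lcp s v)"
    and search_inv_saturated: "v \<in> evens s \<Longrightarrow> scanned s v \<Longrightarrow> saturated E s v"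
    and search_inv_odd_lcpo: "v \<in> odds s \<Longrightarrow> odd (lcpo s v)"
    and search_inv_lcpo_less: "v \<in> odds s \<Longrightarrow> lcpo s v < delta s"
  using assms unfolding search_inv_def by blast+

lemma graph_edgeD:
  assumes "graph V E" "{u, v} \<in> E"
  shows "u \<in> V" "v \<in> V" "u \<noteq> v"
proof -
  obtain a b where "{u, v} = {a, b}" "a \<noteq> b" "a \<in> V" "b \<in> V"
    using assms unfolding graph_def by blast
  then show "u \<in> V" "v \<in> V" "u \<noteq> v" by (auto simp: doubleton_eq_iff)
qed

lemma matching_edges_eq:
  assumes "matching E M" "e1 \<in> M" "e2 \<in> M" "v \<in> e1" "v \<in> e2"
  shows "e1 = e2"
  using assms unfolding matching_def by blast

lemma mate_eq:
  assumes "matching E M" "{u, y} \<in> M"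
  shows "mate M y = u"
  unfolding mate_def
proof (rule the_equality)
  fix w assume "{w, y} \<in> M"
  then have "{w, y} = {u, y}"
    using matching_edges_eq[OF assms(1) _ assms(2), of "{w, y}" y] by blast
  then show "w = u" by (metis doubleton_eq_iff)
qed (fact assms(2))

lemma mate_in_matching:
  assumes "graph V E" "matching E M" "y \<in> \<Union>M"
  shows "{mate M y, y} \<in> M"
proof -
  obtain e where e: "e \<in> M" "y \<in> e" using assms(3) by blast
  then have "e \<in> E" using assms(2) unfolding matching_def by blast
  then obtain a b where "e = {a, b}" using assms(1) unfolding graph_def by blast
  then obtain u where u: "{u, y} \<in> M" using e by (metis insert_commute insertE singletonD)
  then show ?thesis using mate_eq[OF assms(2)] by simp
qed

lemma search_inv_init: "search_inv V E M (init V M)"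
  unfolding search_inv_def init_def inS_def free_def scanned_def by auto

lemma grow_enabled_mate_unlabelled:
  assumes "graph V E" "matching E M" "search_inv V E M s" "grow_enabled E s x y"
  shows "{mate M y, y} \<in> M" "\<not> inS s (mate M y)"
proof -
  have xy: "{x, y} \<in> E" "\<not> inS s y" using assms(4) unfolding grow_enabled_def by auto
  then have "\<not> free V M y" using search_inv_free[OF assms(3)] by blast
  then have "y \<in> \<Union>M" using graph_edgeD(2)[OF assms(1) xy(1)] unfolding free_def by blast
  then show M: "{mate M y, y} \<in> M" by (rule mate_in_matching[OF assms(1,2)])
  show "\<not> inS s (mate M y)" using search_inv_mate_closed[OF assms(3) M] xy(2) by blast
qed

lemma inS_grow_update: "inS (grow_update M s x y) w \<longleftrightarrow> inS s w \<or> w = y \<or> w = mate M y"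
  unfolding inS_def grow_update_def by auto

lemma search_inv_grow:
  assumes "graph V E" "matching E M" "search_inv V E M s" "grow_enabled E s x y"
  shows "search_inv V E M (grow_update M s x y)"
proof -
  define u where "u = mate M y"
  define s' where "s' = grow_update M s x y"
  have uy: "{u, y} \<in> M"
    using grow_enabled_mate_unlabelled[OF assms] by (simp add: u_def)
  have \<Delta>: "even (delta s)" "delta s \<ge> 2" using assms(4) unfolding grow_enabled_def by auto
  have s': "delta s' = delta s" "stg s' = stg s" "evens s' = insert u (evens s)"
    "odds s' = insert y (odds s)" "lcp s' = (lcp s)(u := delta s)"
    "lcpo s' = (lcpo s)(y := delta s - 1)"
    by (simp_all add: s'_def u_def grow_update_def)
  have inS': "inS s' w \<longleftrightarrow> inS s w \<or> w = y \<or> w = u" for w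
    by (simp add: s'_def u_def inS_grow_update)
  have "search_inv V E M s'"
  proof (rule search_invI)
    fix e v w assume e: "e \<in> M" "v \<in> e" "w \<in> e" "inS s' v"
    show "inS s' w"
    proof (cases "inS s v")
      case True
      then show ?thesis using search_inv_mate_closed[OF assms(3) e(1-3)] inS' by blast
    next
      case False
      then have "e = {u, y}" using e inS' matching_edges_eq[OF assms(2) e(1) uy] by blast
      then show ?thesis using e(3) inS' by blast
    qed
  next
    fix v assume v: "v \<in> evens s'" "scanned s' v"
    then have "v \<noteq> u" using s' by (auto simp: scanned_def)
    then have "v \<in> evens s" "scanned s v" using v s' by (auto simp: scanned_def)
    then show "saturated E s' v"
      using search_inv_saturated[OF assms(3)] inS' by (auto simp: saturated_def)
  next
    show "inS s' v" if "free V M v" for v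
      using search_inv_free[OF assms(3) that] inS' by blast
    show "inS s' v" if "v \<in> evens s'" for v
      using that search_inv_even_inS[OF assms(3)] inS' s'(3) by blast
    show "even (lcp s' v)" if "v \<in> evens s'" for v
      using that search_inv_even_lcp[OF assms(3)] \<Delta>(1) s'(3,5) by auto
    show "odd (lcpo s' v)" if "v \<in> odds s'" for v
      using that search_inv_odd_lcpo[OF assms(3)] \<Delta> s'(4,6) by auto
    show "lcpo s' v < delta s'" if "v \<in> odds s'" for v
      using that search_inv_lcpo_less[OF assms(3)] \<Delta> s'(1,4,6) by auto
  qed
  then show ?thesis by (simp add: s'_def)
qed

lemma inS_merge: "inS (merge s B a b) w \<longleftrightarrow> inS s w"
proof -
  have "on_paths s B (node_of s a) (node_of s b) \<subseteq> nodes s" unfolding on_paths_def by blast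
  then show ?thesis unfolding inS_def merge_def Let_def by auto
qed

lemma search_inv_merge:
  assumes "search_inv V E M s" "bridge_enabled E M s a b"
  shows "search_inv V E M (merge s B a b)"
proof -
  define s' where "s' = merge s B a b"
  define Z where "Z = odds s \<inter> \<Union>(on_paths s B (node_of s a) (node_of s b))"
  have s': "delta s' = delta s" "stg s' = stg s" "evens s' = evens s \<union> Z"
    "odds s' = odds s - Z" "lcpo s' = lcpo s"
    "lcp s' = (\<lambda>v. if v \<in> Z then lcp s a + 1 + lcp s b - lcpo s v else lcp s v)"
    by (simp_all add: s'_def Z_def merge_def Let_def)
  have inS': "inS s' = inS s" by (simp add: s'_def inS_merge fun_eq_iff)
  have ab: "lcp s a + lcp s b + 2 = 2 * delta s"
    using assms(2) unfolding bridge_enabled_def by blast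
  have Z_lcp: "even (lcp s' v) \<and> \<not> scanned s' v" if "v \<in> Z" for v
  proof -
    have "odd (lcpo s v)" "lcpo s v < delta s"
      using that search_inv_odd_lcpo[OF assms(1)] search_inv_lcpo_less[OF assms(1)]
      unfolding Z_def by auto
    then obtain k where "lcpo s v = 2 * k + 1" "2 * k + 2 \<le> delta s" by (auto elim!: oddE)
    moreover have "lcp s' v = 2 * delta s - 1 - lcpo s v" using that ab s'(6) by simp
    ultimately have "even (lcp s' v)" "delta s \<le> lcp s' v" by simp_all
    then show ?thesis using s'(1) by (simp add: scanned_def)
  qed
  have old_even: "v \<in> evens s" "lcp s' v = lcp s v" if "v \<in> evens s'" "v \<notin> Z" for v
    using that s'(3,6) by auto
  have "search_inv V E M s'"
  proof (rule search_invI)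
    fix v assume v: "v \<in> evens s'" "scanned s' v"
    then have "v \<notin> Z" using Z_lcp by blast
    then have "v \<in> evens s" "scanned s v"
      using v old_even s'(1,2) by (auto simp: scanned_def)
    then show "saturated E s' v"
      using search_inv_saturated[OF assms(1)] inS' by (simp add: saturated_def)
  next
    show "inS s' v" if "free V M v" for v
      using search_inv_free[OF assms(1) that] inS' by simp
    show "inS s' w" if "e \<in> M" "v \<in> e" "w \<in> e" "inS s' v" for e v w
      using search_inv_mate_closed[OF assms(1) that(1-3)] that(4) inS' by simp
    show "inS s' v" if "v \<in> evens s'" for v
    proof (cases "v \<in> Z")
      case True
      then show ?thesis unfolding inS' Z_def on_paths_def inS_def by blast
    qed (use that old_even search_inv_even_inS[OF assms(1)] inS' in auto)
    show "even (lcp s' v)" if "v \<in> evens s'" for v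
      using that Z_lcp old_even search_inv_even_lcp[OF assms(1)] by (cases "v \<in> Z") auto
    show "odd (lcpo s' v)" "lcpo s' v < delta s'" if "v \<in> odds s'" for v
      using that search_inv_odd_lcpo[OF assms(1)] search_inv_lcpo_less[OF assms(1)] s'(1,4,5)
      by auto
  qed
  then show ?thesis by (simp add: s'_def)
qed

lemma search_inv_stage_change:
  assumes "search_inv V E M s"
    and "nodes s' = nodes s" "evens s' = evens s" "odds s' = odds s"
    and "lcp s' = lcp s" "lcpo s' = lcpo s" "delta s \<le> delta s'"
    and "\<And>v. v \<in> evens s \<Longrightarrow> scanned s' v \<Longrightarrow> saturated E s v"
  shows "search_inv V E M s'"
proof -
  have "inS s' = inS s" "saturated E s' = saturated E s"
    using assms(2) by (simp_all add: inS_def saturated_def fun_eq_iff)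
  then show ?thesis
    using assms unfolding search_inv_def by (metis order_less_le_trans)
qed

lemma search_inv_step:
  assumes "graph V E" "matching E M" "step E M s s'" "search_inv V E M s"
  shows "search_inv V E M s'"
  using assms(3)
proof cases
  case (grow x y)
  then show ?thesis
    using search_inv_grow[OF assms(1,2,4)] unfolding grow_step_def by blast
next
  case end_growth
  have "saturated E s v" if "v \<in> evens s" "scanned s' v" for v
  proof (cases "scanned s v")
    case False
    then have "lcp s v + 2 = delta s" "even (delta s)"
      using that(2) end_growth by (auto simp: scanned_def)
    then show ?thesis
      using that(1) end_growth unfolding saturated_def grow_enabled_def by blast
  qed (use search_inv_saturated[OF assms(4)] that in blast)
  then show ?thesis using end_growth by (intro search_inv_stage_change[OF assms(4)]) auto
next
  case (bridge a b B)
  then show ?thesis using search_inv_merge[OF assms(4)] by blast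
next
  case (stop a b)
  then have "scanned s' = scanned s"
    by (auto simp: scanned_def bridge_enabled_def fun_eq_iff)
  then show ?thesis
    using search_inv_saturated[OF assms(4)] stop
    by (intro search_inv_stage_change[OF assms(4)]) auto
next
  case next_phase
  have "scanned s v" if "v \<in> evens s" "scanned s' v" for v
  proof -
    have "lcp s v + 2 \<le> delta s" "stg s = Bridge"
      using that(2) next_phase by (auto simp: scanned_def)
    moreover have "even (lcp s v + 2)" using search_inv_even_lcp[OF assms(4) that(1)] by simp
    then have "even (delta s)" if "lcp s v + 2 = delta s" using that by metis
    ultimately show ?thesis unfolding scanned_def by fastforce
  qed
  then show ?thesis
    using search_inv_saturated[OF assms(4)] next_phase
    by (intro search_inv_stage_change[OF assms(4)]) auto
qed

lemma reachable_search_inv: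
  assumes "graph V E" "matching E M" "reachable V E M s"
  shows "search_inv V E M s"
  using assms(3) unfolding reachable_def
  by (induction rule: rtranclp_induct)
    (auto intro: search_inv_init search_inv_step[OF assms(1,2)])

theorem lemma6:
  assumes "graph V E" and "matching E M"
    and "reachable V E M s"
    and "grow_step E M s x y s'"
    and "z \<in> evens s'" and "{z, mate M y} \<in> E"
  shows "lcp s' z \<ge> lcp s' x \<and> lcp s' z + lcp s' (mate M y) + 2 \<ge> 2 * delta s'"
proof -
  define u where "u = mate M y"
  have inv: "search_inv V E M s" using reachable_search_inv assms(1-3) .
  have grow: "grow_enabled E s x y" and s': "s' = grow_update M s x y"
    using assms(4) unfolding grow_step_def by auto
  have u_new: "\<not> inS s u"
    using grow_enabled_mate_unlabelled[OF assms(1,2) inv grow] by (simp add: u_def)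
  have x: "x \<in> evens s" "lcp s x + 2 = delta s" "stg s = Grow"
    using grow unfolding grow_enabled_def by auto
  then have "x \<noteq> u" using search_inv_even_inS[OF inv] u_new by blast
  moreover have "z \<noteq> u" using graph_edgeD(3)[OF assms(1,6)] by (simp add: u_def)
  moreover have "z \<in> evens s" using assms(5) \<open>z \<noteq> u\<close> by (simp add: s' u_def grow_update_def)
  then have "\<not> scanned s z"
    using search_inv_saturated[OF inv] u_new assms(6) unfolding saturated_def u_def by blast
  then have "lcp s z \<ge> lcp s x" using x by (auto simp: scanned_def)
  ultimately show ?thesis using x by (simp add: s' u_def grow_update_def)
qed

end
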